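(* Let $m,h\in\mathbb N$ and let $\mathcal P_{m,h}$ be the class of functions on $\mathbb R^h$ of the form $$p(y_1,\dots,y_h)=b_1y_1^{e_1}+b_2y_2^{e_2}+\dots+b_hy_h^{e_h},$$ where $0=e_1<e_2<\dots<e_h$ are integers and $b_1,\dots,b_h\in\mathbb Z$ satisfy $|b_i|\le m$ for all $i$ and $(b_1,\dots,b_h)\ne(0,\dots,0)$. Let $\eta>1$ be transcendental. Then there exist constants $\delta>0$ and $\varepsilon>0$, depending only on $\eta,m,h$, such that $$|p(y_1,\dots,y_h)|\ge\varepsilon$$ for all $p\in\mathcal P_{m,h}$ and all $(y_1,\dots,y_h)\in\mathbb R^h$ satisfying $$\frac{y_j^{e_j}}{y_i^{e_i}}\in\Big[(\eta-\delta)^{e_j-e_i},(\eta+\delta)^{e_j-e_i}\Big]\qquad\text{for all }1\le i<j\le h$$ (here $e_1,\dots,e_h$ are the exponents of the particular $p$). *)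

theory Defs
  imports Complex_Main "HOL-Computational_Algebra.Polynomial"
begin

end

theory Submission
  imports Defs
begin

text \<open>
  Divide \<open>p\<close> by its last term with nonzero coefficient, \<open>b\<^sub>k y\<^sub>k\<^bsup>e\<^sub>k\<^esup>\<close>;
  the ratio conditions force \<open>y\<^sub>k\<^bsup>e\<^sub>k\<^esup> \<ge> 1\<close>, so it suffices to bound the normalized sum
  \<open>\<Sum> a\<^sub>d r\<^sub>d\<close> from below, where \<open>d = e\<^sub>k - e\<^sub>i\<close> ranges over at most \<open>h\<close> distinct gaps,
  \<open>a\<^sub>0 \<noteq> 0\<close>, and \<open>r\<^sub>d\<close> lies between \<open>(\<eta> + \<delta>)\<^sup>-\<^sup>d\<close> and \<open>(\<eta> - \<delta>)\<^sup>-\<^sup>d\<close>.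
  If all gaps are at most \<open>D\<close>, this is a small perturbation of one of finitely many values
  \<open>\<Sum>\<^sub>d\<^sub>\<le>\<^sub>D a\<^sub>d \<eta>\<^sup>-\<^sup>d\<close>, all nonzero because \<open>1/\<eta>\<close> is transcendental.
  Gaps beyond a large \<open>D'\<close> contribute geometrically little, so if no gap lies in \<open>(D, D']\<close>
  the near part dominates; otherwise fewer gaps exceed \<open>D'\<close> than exceed \<open>D\<close>, and we induct
  on that number.
\<close>

lemma int_poly_sum_nonzero_at_transcendental:
  fixes x :: "'a :: field_char_0" and a :: "nat \<Rightarrow> int"
  assumes "\<not> algebraic x" "d0 \<le> D" "a d0 \<noteq> 0"
  shows "(\<Sum>d\<le>D. of_int (a d) * x ^ d) \<noteq> 0"
proof
  assume zero: "(\<Sum>d\<le>D. of_int (a d) * x ^ d) = 0"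
  define q :: "'a poly" where "q = (\<Sum>d\<le>D. monom (of_int (a d)) d)"
  have coeff_q: "coeff q n = (if n \<le> D then of_int (a n) else 0)" for n
    by (simp add: q_def coeff_sum)
  have "q \<noteq> 0" using coeff_q[of d0] assms(2,3) by auto
  moreover have "poly q x = 0" using zero by (simp add: q_def poly_sum poly_monom)
  moreover have "coeff q n \<in> \<int>" for n by (simp add: coeff_q)
  ultimately have "algebraic x" by (intro algebraicI[of q]) auto
  with assms(1) show False ..
qed

lemma int_poly_sums_bounded_below_at_transcendental:
  fixes x :: real
  assumes "\<not> algebraic x"
  shows "\<exists>c>0. \<forall>a. (\<forall>d\<le>D. \<bar>a d\<bar> \<le> int m) \<longrightarrow> (\<exists>d\<le>D. a d \<noteq> 0) \<longrightarrow>
           c \<le> \<bar>\<Sum>d\<le>D. of_int (a d) * x ^ d\<bar>"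
proof -
  define A where "A = {a. \<forall>d. (d \<in> {..D} \<longrightarrow> a d \<in> {-int m..int m}) \<and> (d \<notin> {..D} \<longrightarrow> a d = 0)}"
  define val where "val a = \<bar>\<Sum>d\<le>D. of_int (a d) * x ^ d\<bar>" for a :: "nat \<Rightarrow> int"
  define c where "c = Min (insert 1 (val ` {a\<in>A. \<exists>d\<le>D. a d \<noteq> 0}))"
  have fin: "finite A" unfolding A_def by (intro finite_set_of_finite_funs) auto
  have "c > 0" unfolding c_def using fin
    by (subst Min_gr_iff) (auto simp: val_def dest: int_poly_sum_nonzero_at_transcendental[OF assms])
  moreover have "c \<le> val a" if "\<forall>d\<le>D. \<bar>a d\<bar> \<le> int m" "\<exists>d\<le>D. a d \<noteq> 0" for a
  proof -
    define a' where "a' d = (if d \<le> D then a d else 0)" for d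
    have "a' \<in> A" "\<exists>d\<le>D. a' d \<noteq> 0" using that by (auto simp: A_def a'_def abs_le_iff)
    then have "c \<le> val a'" unfolding c_def using fin by (intro Min_le) auto
    also have "val a' = val a" by (simp add: val_def a'_def)
    finally show ?thesis .
  qed
  ultimately show ?thesis unfolding val_def by blast
qed

text \<open>
  \<open>S\<close>, \<open>a\<close>, \<open>r\<close> encode \<open>p(y)\<close> divided by its last nonzero term \<open>b\<^sub>k y\<^sub>k\<^bsup>e\<^sub>k\<^esup>\<close>:
  the term with index \<open>i\<close> becomes \<open>a d * r d\<close> with gap \<open>d = e\<^sub>k - e\<^sub>i\<close>, \<open>a d = b\<^sub>i\<close> and
  \<open>r d = y\<^sub>i\<^bsup>e\<^sub>i\<^esup> / y\<^sub>k\<^bsup>e\<^sub>k\<^esup>\<close>, an approximation of \<open>\<eta>\<^sup>-\<^sup>d\<close>.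
\<close>
definition admissible :: "real \<Rightarrow> real \<Rightarrow> nat \<Rightarrow> nat set \<Rightarrow> (nat \<Rightarrow> int) \<Rightarrow> (nat \<Rightarrow> real) \<Rightarrow> bool" where
  "admissible \<eta> \<delta> m S a r \<longleftrightarrow> finite S \<and> 0 \<in> S \<and> a 0 \<noteq> 0 \<and>
     (\<forall>d\<in>S. \<bar>a d\<bar> \<le> int m \<and> inverse (\<eta> + \<delta>) ^ d \<le> r d \<and> r d \<le> inverse (\<eta> - \<delta>) ^ d)"

lemma admissible_subset:
  "admissible \<eta> \<delta> m S a r \<Longrightarrow> T \<subseteq> S \<Longrightarrow> 0 \<in> T \<Longrightarrow> admissible \<eta> \<delta> m T a r"
  unfolding admissible_def by (auto intro: finite_subset)

lemma admissible_dist_inverse_power: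
  assumes "admissible \<eta> \<delta> m S a r" "0 < \<delta>" "\<delta> < \<eta>" "d \<in> S"
  shows "\<bar>r d - inverse \<eta> ^ d\<bar> \<le> inverse (\<eta> - \<delta>) ^ d - inverse (\<eta> + \<delta>) ^ d"
proof -
  have "inverse (\<eta> + \<delta>) ^ d \<le> inverse \<eta> ^ d" "inverse \<eta> ^ d \<le> inverse (\<eta> - \<delta>) ^ d"
    using assms(2,3) by (auto intro!: power_mono le_imp_inverse_le)
  then show ?thesis using assms(1,4) by (auto simp: admissible_def abs_le_iff)
qed

lemma admissible_sum_dist_inverse_powers:
  assumes adm: "admissible \<eta> \<delta> m S a r" and "0 < \<delta>" "\<delta> < \<eta>" "S \<subseteq> {..D}"
    and narrow: "\<forall>d\<in>{..D}. inverse (\<eta> - \<delta>) ^ d - inverse (\<eta> + \<delta>) ^ d \<le> \<kappa>"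
  shows "\<bar>(\<Sum>d\<in>S. of_int (a d) * r d) - (\<Sum>d\<in>S. of_int (a d) * inverse \<eta> ^ d)\<bar>
           \<le> (real D + 1) * (real m * \<kappa>)"
proof -
  have "\<bar>of_int (a d) * r d - of_int (a d) * inverse \<eta> ^ d\<bar> \<le> real m * \<kappa>" if "d \<in> S" for d
  proof -
    have "\<bar>a d\<bar> \<le> int m" using adm that by (simp add: admissible_def)
    moreover have "\<bar>r d - inverse \<eta> ^ d\<bar> \<le> \<kappa>"
      using admissible_dist_inverse_power[OF adm assms(2,3) that] narrow that assms(4) by force
    ultimately show ?thesis
      by (simp add: abs_mult flip: right_diff_distrib) (intro mult_mono; simp)
  qed
  then have "\<bar>(\<Sum>d\<in>S. of_int (a d) * r d) - (\<Sum>d\<in>S. of_int (a d) * inverse \<eta> ^ d)\<bar>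
      \<le> card S * (real m * \<kappa>)"
    unfolding sum_subtractf[symmetric] by (intro order_trans[OF sum_abs sum_bounded_above]) auto
  also have "\<dots> \<le> (real D + 1) * (real m * \<kappa>)"
  proof (rule mult_right_mono)
    show "real (card S) \<le> real D + 1" using card_mono[OF _ assms(4)] by simp
    show "0 \<le> real m * \<kappa>" using narrow by force
  qed
  finally show ?thesis .
qed

definition admissible_sums_ge :: "real \<Rightarrow> real \<Rightarrow> nat \<Rightarrow> (nat set \<Rightarrow> bool) \<Rightarrow> real \<Rightarrow> bool" where
  "admissible_sums_ge \<eta> \<delta> m P c \<longleftrightarrow>
     (\<forall>S a r. admissible \<eta> \<delta> m S a r \<longrightarrow> P S \<longrightarrow> c \<le> \<bar>\<Sum>d\<in>S. of_int (a d) * r d\<bar>)"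

lemma admissible_sums_ge_mono:
  assumes "admissible_sums_ge \<eta> \<delta> m P c" "\<And>S. finite S \<Longrightarrow> Q S \<Longrightarrow> P S"
  shows "admissible_sums_ge \<eta> \<delta> m Q c"
  using assms unfolding admissible_sums_ge_def admissible_def by blast

lemma admissible_sums_ge_bounded_gaps:
  fixes \<eta> :: real
  assumes "\<eta> > 1" "\<not> algebraic \<eta>"
  shows "\<exists>c>0. \<forall>\<^sub>F \<delta> in at_right 0. admissible_sums_ge \<eta> \<delta> m (\<lambda>S. S \<subseteq> {..D}) c"
proof -
  have "\<not> algebraic (inverse \<eta>)" using assms(2) algebraic_inverse by fastforce
  then obtain c0 where "c0 > 0" and c0_le: "\<And>a. \<forall>d\<le>D. \<bar>a d\<bar> \<le> int m \<Longrightarrow> \<exists>d\<le>D. a d \<noteq> 0 \<Longrightarrow>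
      c0 \<le> \<bar>\<Sum>d\<le>D. of_int (a d) * inverse \<eta> ^ d\<bar>"
    using int_poly_sums_bounded_below_at_transcendental by blast
  define \<kappa> where "\<kappa> = c0 / (2 * (real m + 1) * (real D + 1))"
  have "\<kappa> > 0" using \<open>c0 > 0\<close> by (simp add: \<kappa>_def)
  have narrow: "\<forall>\<^sub>F \<delta> in at_right 0. \<forall>d\<in>{..D}. inverse (\<eta> - \<delta>) ^ d - inverse (\<eta> + \<delta>) ^ d < \<kappa>"
  proof (intro eventually_ball_finite ballI)
    fix d
    have "((\<lambda>\<delta>. inverse (\<eta> - \<delta>) ^ d - inverse (\<eta> + \<delta>) ^ d) \<longlongrightarrow>
            inverse (\<eta> - 0) ^ d - inverse (\<eta> + 0) ^ d) (at_right 0)"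
      using assms(1) by (intro tendsto_intros) auto
    then show "\<forall>\<^sub>F \<delta> in at_right 0. inverse (\<eta> - \<delta>) ^ d - inverse (\<eta> + \<delta>) ^ d < \<kappa>"
      using \<open>\<kappa> > 0\<close> by (auto dest: order_tendstoD(2))
  qed simp
  have "\<forall>\<^sub>F \<delta> in at_right 0. 0 < \<delta> \<and> \<delta> < \<eta>"
    using assms(1) by (auto simp: eventually_at_right_field intro!: exI[of _ \<eta>])
  with narrow have "\<forall>\<^sub>F \<delta> in at_right 0. admissible_sums_ge \<eta> \<delta> m (\<lambda>S. S \<subseteq> {..D}) (c0 / 2)"
    unfolding admissible_sums_ge_def
  proof (eventually_elim, intro allI impI)
    fix \<delta> S a r
    assume \<delta>: "\<forall>d\<in>{..D}. inverse (\<eta> - \<delta>) ^ d - inverse (\<eta> + \<delta>) ^ d < \<kappa>" "0 < \<delta> \<and> \<delta> < \<eta>"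
      and adm: "admissible \<eta> \<delta> m S a r" and "S \<subseteq> {..D}"
    define a' where "a' d = (if d \<in> S then a d else 0)" for d
    have "c0 \<le> \<bar>\<Sum>d\<le>D. of_int (a' d) * inverse \<eta> ^ d\<bar>"
      using adm by (intro c0_le) (auto simp: admissible_def a'_def intro!: exI[of _ 0])
    also have "(\<Sum>d\<le>D. of_int (a' d) * inverse \<eta> ^ d) = (\<Sum>d\<in>S. of_int (a d) * inverse \<eta> ^ d)"
      using \<open>S \<subseteq> {..D}\<close> by (intro sum.mono_neutral_cong_right) (auto simp: a'_def)
    finally have unperturbed: "c0 \<le> \<bar>\<Sum>d\<in>S. of_int (a d) * inverse \<eta> ^ d\<bar>" .
    have "\<bar>(\<Sum>d\<in>S. of_int (a d) * r d) - (\<Sum>d\<in>S. of_int (a d) * inverse \<eta> ^ d)\<bar>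
        \<le> (real D + 1) * (real m * \<kappa>)"
      using \<delta> \<open>S \<subseteq> {..D}\<close> by (intro admissible_sum_dist_inverse_powers[OF adm]) (auto intro: less_imp_le)
    also have "\<dots> = c0 * real m / (2 * (real m + 1))"
      by (simp add: \<kappa>_def)
    also have "\<dots> \<le> c0 / 2"
      using \<open>c0 > 0\<close> by (simp add: field_simps)
    finally show "c0 / 2 \<le> \<bar>\<Sum>d\<in>S. of_int (a d) * r d\<bar>" using unperturbed by linarith
  qed
  then show ?thesis using \<open>c0 > 0\<close> by (intro exI[of _ "c0 / 2"]) auto
qed

lemma admissible_sum_far_gaps_le:
  fixes \<eta> :: real
  assumes adm: "admissible \<eta> \<delta> m S a r" and "\<eta> > 1" "0 < \<delta>" "\<delta> \<le> (\<eta> - 1) / 2"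
    and "T \<subseteq> S" "\<forall>d\<in>T. D \<le> d"
  shows "\<bar>\<Sum>d\<in>T. of_int (a d) * r d\<bar> \<le> card T * (real m * (2 / (\<eta> + 1)) ^ D)"
proof -
  have "\<bar>of_int (a d) * r d\<bar> \<le> real m * (2 / (\<eta> + 1)) ^ D" if "d \<in> T" for d
  proof -
    have d: "d \<in> S" "D \<le> d" using assms(5,6) that by auto
    have "0 \<le> inverse (\<eta> + \<delta>) ^ d" using assms(2,3) by simp
    also have "\<dots> \<le> r d" using adm d by (simp add: admissible_def)
    finally have "0 \<le> r d" .
    have "r d \<le> inverse (\<eta> - \<delta>) ^ d" using adm d by (simp add: admissible_def)
    also have "\<dots> \<le> (2 / (\<eta> + 1)) ^ d"
      using assms(2-4) by (intro power_mono) (auto simp: field_simps)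
    also have "\<dots> \<le> (2 / (\<eta> + 1)) ^ D"
      using assms(2) d by (intro power_decreasing) auto
    finally have "\<bar>r d\<bar> \<le> (2 / (\<eta> + 1)) ^ D" using \<open>0 \<le> r d\<close> by simp
    moreover have "\<bar>a d\<bar> \<le> int m" using adm d by (simp add: admissible_def)
    ultimately show ?thesis by (simp add: abs_mult) (intro mult_mono; simp)
  qed
  then show ?thesis by (intro order_trans[OF sum_abs sum_bounded_above]) auto
qed

lemma admissible_sum_ge_half_near_part:
  fixes \<eta> :: real
  assumes adm: "admissible \<eta> \<delta> m S a r" and "\<eta> > 1" "0 < \<delta>" "\<delta> \<le> (\<eta> - 1) / 2" "card S \<le> H"
    and gap: "\<forall>d\<in>S. d \<le> D \<or> D' < d"
    and near: "c \<le> \<bar>\<Sum>d\<in>{d\<in>S. d \<le> D}. of_int (a d) * r d\<bar>"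
    and tail: "real H * (real m * (2 / (\<eta> + 1)) ^ D') \<le> c / 2"
  shows "c / 2 \<le> \<bar>\<Sum>d\<in>S. of_int (a d) * r d\<bar>"
proof -
  define N where "N = {d\<in>S. d \<le> D}"
  have "finite S" using adm by (simp add: admissible_def)
  then have "card (S - N) \<le> H" using card_mono[of S "S - N"] \<open>card S \<le> H\<close> by auto
  have "\<bar>\<Sum>d\<in>S - N. of_int (a d) * r d\<bar> \<le> card (S - N) * (real m * (2 / (\<eta> + 1)) ^ D')"
    using gap assms(2-4) by (intro admissible_sum_far_gaps_le[OF adm]) (auto simp: N_def)
  also have "\<dots> \<le> real H * (real m * (2 / (\<eta> + 1)) ^ D')"
    using \<open>card (S - N) \<le> H\<close> assms(2) by (intro mult_right_mono) auto
  finally have "\<bar>\<Sum>d\<in>S - N. of_int (a d) * r d\<bar> \<le> c / 2" using tail by linarith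
  moreover have "(\<Sum>d\<in>S. of_int (a d) * r d) =
      (\<Sum>d\<in>S - N. of_int (a d) * r d) + (\<Sum>d\<in>N. of_int (a d) * r d)"
    using \<open>finite S\<close> by (intro sum.subset_diff) (auto simp: N_def)
  ultimately show ?thesis using near unfolding N_def by linarith
qed

lemma card_gaps_beyond_less:
  fixes S :: "nat set"
  assumes "finite S" "d \<in> S" "D < d" "d \<le> D'"
  shows "card {d\<in>S. D' < d} < card {d\<in>S. D < d}"
proof (rule psubset_card_mono)
  have "d \<in> {d\<in>S. D < d}" "d \<notin> {d\<in>S. D' < d}" using assms(2-4) by auto
  moreover have "{d\<in>S. D' < d} \<subseteq> {d\<in>S. D < d}" using assms(3,4) by auto
  ultimately show "{d\<in>S. D' < d} \<subset> {d\<in>S. D < d}" by blast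
qed (use assms(1) in simp)

lemma admissible_sums_ge_induct_step:
  fixes \<eta> :: real
  assumes near: "admissible_sums_ge \<eta> \<delta> m (\<lambda>S. S \<subseteq> {..D}) c1"
    and far: "admissible_sums_ge \<eta> \<delta> m (\<lambda>S. card S \<le> H \<and> card {d\<in>S. D' < d} \<le> n) c2"
    and \<delta>: "0 < \<delta> \<and> \<delta> \<le> (\<eta> - 1) / 2" and "\<eta> > 1" "D < D'"
    and tail: "real H * (real m * (2 / (\<eta> + 1)) ^ D') \<le> c1 / 2"
  shows "admissible_sums_ge \<eta> \<delta> m (\<lambda>S. card S \<le> H \<and> card {d\<in>S. D < d} \<le> Suc n) (min (c1 / 2) c2)"
  unfolding admissible_sums_ge_def
proof (intro allI impI)
  fix S a r
  assume adm: "admissible \<eta> \<delta> m S a r" and "card S \<le> H \<and> card {d\<in>S. D < d} \<le> Suc n"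
  then have "card S \<le> H" and gaps: "card {d\<in>S. D < d} \<le> Suc n" by simp_all
  show "min (c1 / 2) c2 \<le> \<bar>\<Sum>d\<in>S. of_int (a d) * r d\<bar>"
  proof (cases "\<exists>d\<in>S. D < d \<and> d \<le> D'")
    case True
    then have "card {d\<in>S. D' < d} \<le> n"
      using gaps card_gaps_beyond_less[of S _ D D'] adm by (force simp: admissible_def)
    then show ?thesis using far adm \<open>card S \<le> H\<close> by (force simp: admissible_sums_ge_def)
  next
    case False
    have "admissible \<eta> \<delta> m {d\<in>S. d \<le> D} a r"
      using adm by (intro admissible_subset[OF adm]) (auto simp: admissible_def)
    then have "c1 \<le> \<bar>\<Sum>d\<in>{d\<in>S. d \<le> D}. of_int (a d) * r d\<bar>"
      using near by (auto simp: admissible_sums_ge_def)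
    then have "c1 / 2 \<le> \<bar>\<Sum>d\<in>S. of_int (a d) * r d\<bar>"
      using False \<delta> assms(4) tail \<open>card S \<le> H\<close>
      by (intro admissible_sum_ge_half_near_part[OF adm]) auto
    then show ?thesis by linarith
  qed
qed

lemma admissible_sums_ge_few_far_gaps:
  fixes \<eta> :: real
  assumes "\<eta> > 1" "\<not> algebraic \<eta>"
  shows "\<exists>c>0. \<forall>\<^sub>F \<delta> in at_right 0.
           admissible_sums_ge \<eta> \<delta> m (\<lambda>S. card S \<le> H \<and> card {d\<in>S. D < d} \<le> n) c"
proof (induction n arbitrary: D)
  case 0
  obtain c where "c > 0" and near: "\<forall>\<^sub>F \<delta> in at_right 0. admissible_sums_ge \<eta> \<delta> m (\<lambda>S. S \<subseteq> {..D}) c"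
    using admissible_sums_ge_bounded_gaps[OF assms] by blast
  from near have "\<forall>\<^sub>F \<delta> in at_right 0.
      admissible_sums_ge \<eta> \<delta> m (\<lambda>S. card S \<le> H \<and> card {d\<in>S. D < d} \<le> 0) c"
    by (elim eventually_mono admissible_sums_ge_mono) (auto simp: not_less)
  with \<open>c > 0\<close> show ?case by blast
next
  case (Suc n)
  obtain c1 where "c1 > 0" and near: "\<forall>\<^sub>F \<delta> in at_right 0. admissible_sums_ge \<eta> \<delta> m (\<lambda>S. S \<subseteq> {..D}) c1"
    using admissible_sums_ge_bounded_gaps[OF assms] by blast
  define u where "u = 2 / (\<eta> + 1)"
  have "((\<lambda>N. real H * (real m * u ^ N)) \<longlongrightarrow> 0) sequentially"
    using assms(1) by (intro tendsto_mult_right_zero LIMSEQ_power_zero) (auto simp: u_def)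
  then have "\<forall>\<^sub>F N in sequentially. real H * (real m * u ^ N) < c1 / 2 \<and> D < N"
    using \<open>c1 > 0\<close> by (intro eventually_conj order_tendstoD(2)[of _ 0] eventually_gt_at_top) simp_all
  then obtain D' where "D < D'" and tail: "real H * (real m * u ^ D') \<le> c1 / 2"
    by (auto simp: eventually_sequentially less_imp_le)
  obtain c2 where "c2 > 0" and IH: "\<forall>\<^sub>F \<delta> in at_right 0.
      admissible_sums_ge \<eta> \<delta> m (\<lambda>S. card S \<le> H \<and> card {d\<in>S. D' < d} \<le> n) c2"
    using Suc.IH by blast
  have "\<forall>\<^sub>F \<delta> in at_right 0. 0 < \<delta> \<and> \<delta> \<le> (\<eta> - 1) / 2"
    using assms(1) by (auto simp: eventually_at_right_field intro!: exI[of _ "(\<eta> - 1) / 2"])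
  with near IH have "\<forall>\<^sub>F \<delta> in at_right 0.
      admissible_sums_ge \<eta> \<delta> m (\<lambda>S. card S \<le> H \<and> card {d\<in>S. D < d} \<le> Suc n) (min (c1 / 2) c2)"
    by eventually_elim (rule admissible_sums_ge_induct_step[OF _ _ _ assms(1) \<open>D < D'\<close> tail[unfolded u_def]])
  then show ?case using \<open>c1 > 0\<close> \<open>c2 > 0\<close> by (intro exI[of _ "min (c1 / 2) c2"]) auto
qed

lemma admissible_sums_ge_card_le:
  fixes \<eta> :: real
  assumes "\<eta> > 1" "\<not> algebraic \<eta>"
  shows "\<exists>c>0. \<forall>\<^sub>F \<delta> in at_right 0. admissible_sums_ge \<eta> \<delta> m (\<lambda>S. card S \<le> H) c"
proof -
  obtain c where "c > 0" and bound: "\<forall>\<^sub>F \<delta> in at_right 0.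
      admissible_sums_ge \<eta> \<delta> m (\<lambda>S. card S \<le> H \<and> card {d\<in>S. 0 < d} \<le> H) c"
    using admissible_sums_ge_few_far_gaps[OF assms] by blast
  have "card {d\<in>S. 0 < d} \<le> card S" if "finite S" for S :: "nat set"
    using that by (intro card_mono) auto
  with bound have "\<forall>\<^sub>F \<delta> in at_right 0. admissible_sums_ge \<eta> \<delta> m (\<lambda>S. card S \<le> H) c"
    by (elim eventually_mono admissible_sums_ge_mono) (auto intro: order_trans)
  with \<open>c > 0\<close> show ?thesis by blast
qed

lemma inverse_le_inverse_power_bounds:
  fixes q \<eta> \<delta> :: real
  assumes "0 < \<delta>" "\<delta> < \<eta>" "(\<eta> - \<delta>) ^ n \<le> q" "q \<le> (\<eta> + \<delta>) ^ n"
  shows "inverse (\<eta> + \<delta>) ^ n \<le> inverse q" "inverse q \<le> inverse (\<eta> - \<delta>) ^ n"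
proof -
  have "0 < (\<eta> - \<delta>) ^ n" using assms(1,2) by simp
  then show "inverse (\<eta> + \<delta>) ^ n \<le> inverse q" "inverse q \<le> inverse (\<eta> - \<delta>) ^ n"
    using assms(3,4) by (auto simp: power_inverse intro!: le_imp_inverse_le)
qed

lemma admissible_image:
  assumes "finite I" "k \<in> I" "inj_on g I" "g k = 0" "f k \<noteq> 0"
    and "\<And>i. i \<in> I \<Longrightarrow> \<bar>f i\<bar> \<le> int m \<and> inverse (\<eta> + \<delta>) ^ g i \<le> \<rho> i \<and> \<rho> i \<le> inverse (\<eta> - \<delta>) ^ g i"
  shows "admissible \<eta> \<delta> m (g ` I) (f \<circ> the_inv_into I g) (\<rho> \<circ> the_inv_into I g)"
proof -
  have "0 \<in> g ` I" using assms(2,4) by force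
  moreover have "the_inv_into I g 0 = k" using the_inv_into_f_f[OF assms(3,2)] assms(4) by simp
  ultimately show ?thesis
    using assms the_inv_into_f_f[OF assms(3)] by (auto simp: admissible_def)
qed

lemma inj_on_exponent_gaps:
  fixes e :: "nat \<Rightarrow> nat"
  assumes e_mono: "\<forall>i j. 1 \<le> i \<longrightarrow> i < j \<longrightarrow> j \<le> h \<longrightarrow> e i < e j" and "k \<le> h"
  shows "inj_on (\<lambda>i. e k - e i) {1..k}"
proof (rule inj_onI)
  have e_le: "e i \<le> e k" if "i \<in> {1..k}" for i
    using that e_mono assms(2) by (cases "i = k") (auto intro: less_imp_le)
  fix i j assume ij: "i \<in> {1..k}" "j \<in> {1..k}" "e k - e i = e k - e j"
  then have "e i = e j" using e_le[OF ij(1)] e_le[OF ij(2)] by arith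
  then show "i = j" using e_mono ij assms(2) by (metis atLeastAtMost_iff le_trans linorder_neqE_nat less_irrefl)
qed

lemma leading_power_ge_one:
  fixes \<eta> \<delta> :: real and e :: "nat \<Rightarrow> nat" and y :: "nat \<Rightarrow> real"
  assumes "0 < \<delta>" "\<delta> < \<eta> - 1" and "e 1 = 0"
    and ratios: "\<forall>i j. 1 \<le> i \<longrightarrow> i < j \<longrightarrow> j \<le> h \<longrightarrow>
          y j ^ e j / y i ^ e i \<in> {(\<eta> - \<delta>) ^ (e j - e i) .. (\<eta> + \<delta>) ^ (e j - e i)}"
    and "1 \<le> k" "k \<le> h"
  shows "1 \<le> y k ^ e k"
proof (cases "k = 1")
  case False
  then have "(\<eta> - \<delta>) ^ e k \<le> y k ^ e k" using ratios assms(3,5,6) by force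
  moreover have "1 \<le> (\<eta> - \<delta>) ^ e k" using assms(2) by (simp add: one_le_power)
  ultimately show ?thesis by simp
qed (use assms(3) in simp)

lemma normalize_by_last_nonzero_term:
  fixes \<eta> \<delta> :: real and e :: "nat \<Rightarrow> nat" and b :: "nat \<Rightarrow> int" and y :: "nat \<Rightarrow> real"
  assumes "0 < \<delta>" "\<delta> < \<eta> - 1" and "e 1 = 0"
    and e_mono: "\<forall>i j. 1 \<le> i \<longrightarrow> i < j \<longrightarrow> j \<le> h \<longrightarrow> e i < e j"
    and b_bound: "\<forall>i\<in>{1..h}. \<bar>b i\<bar> \<le> int m" and "\<exists>i\<in>{1..h}. b i \<noteq> 0"
    and ratios: "\<forall>i j. 1 \<le> i \<longrightarrow> i < j \<longrightarrow> j \<le> h \<longrightarrow>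
          y j ^ e j / y i ^ e i \<in> {(\<eta> - \<delta>) ^ (e j - e i) .. (\<eta> + \<delta>) ^ (e j - e i)}"
  shows "\<exists>S a r. admissible \<eta> \<delta> m S a r \<and> card S \<le> h \<and>
           \<bar>\<Sum>d\<in>S. of_int (a d) * r d\<bar> \<le> \<bar>\<Sum>i=1..h. of_int (b i) * y i ^ e i\<bar>"
proof -
  define x where "x i = y i ^ e i" for i
  define k where "k = Max {i\<in>{1..h}. b i \<noteq> 0}"
  have "k \<in> {i\<in>{1..h}. b i \<noteq> 0}" unfolding k_def using assms(6) by (intro Max_in) auto
  then have k: "1 \<le> k" "k \<le> h" "b k \<noteq> 0" by auto
  have b_zero: "b i = 0" if "i \<in> {k<..h}" for i
  proof (rule ccontr)
    assume "b i \<noteq> 0"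
    with that have "i \<le> k" unfolding k_def by (intro Max_ge) auto
    with that show False by simp
  qed
  have "1 \<le> x k" unfolding x_def using leading_power_ge_one[OF assms(1-3) ratios k(1,2)] .
  define g where "g i = e k - e i" for i
  define \<rho> where "\<rho> i = x i / x k" for i
  have "inj_on g {1..k}" unfolding g_def using e_mono k(2) by (rule inj_on_exponent_gaps)
  have "\<bar>b i\<bar> \<le> int m \<and> inverse (\<eta> + \<delta>) ^ g i \<le> \<rho> i \<and> \<rho> i \<le> inverse (\<eta> - \<delta>) ^ g i"
    if "i \<in> {1..k}" for i
  proof (cases "i = k")
    case False
    then have "\<rho> i = inverse (x k / x i)" by (simp add: \<rho>_def)
    then show ?thesis
      using inverse_le_inverse_power_bounds[of \<delta> \<eta> "g i" "x k / x i"] ratios b_bound that k assms(1,2) False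
      by (auto simp: g_def x_def)
  qed (use \<open>1 \<le> x k\<close> b_bound k in \<open>simp add: g_def \<rho>_def\<close>)
  then have "admissible \<eta> \<delta> m (g ` {1..k}) (b \<circ> the_inv_into {1..k} g) (\<rho> \<circ> the_inv_into {1..k} g)"
    using k \<open>inj_on g {1..k}\<close> by (intro admissible_image) (simp_all add: g_def)
  moreover have "(\<Sum>d\<in>g ` {1..k}. of_int ((b \<circ> the_inv_into {1..k} g) d) * (\<rho> \<circ> the_inv_into {1..k} g) d)
      = (\<Sum>i=1..k. of_int (b i) * \<rho> i)"
    using \<open>inj_on g {1..k}\<close> by (simp add: sum.reindex the_inv_into_f_f)
  moreover have "card (g ` {1..k}) \<le> h" using card_image_le[of "{1..k}" g] k by simp
  moreover have "(\<Sum>i=1..h. of_int (b i) * y i ^ e i) = x k * (\<Sum>i=1..k. of_int (b i) * \<rho> i)"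
  proof -
    have "(\<Sum>i=1..h. of_int (b i) * y i ^ e i) = (\<Sum>i=1..k. of_int (b i) * x i)"
      unfolding x_def using k b_zero by (intro sum.mono_neutral_right) auto
    also have "\<dots> = x k * (\<Sum>i=1..k. of_int (b i) * \<rho> i)"
      using \<open>1 \<le> x k\<close> by (simp add: sum_distrib_left \<rho>_def)
    finally show ?thesis .
  qed
  moreover have "\<bar>s\<bar> \<le> \<bar>x k * s\<bar>" for s
    using mult_right_mono[OF \<open>1 \<le> x k\<close> abs_ge_zero[of s]] \<open>1 \<le> x k\<close> by (simp add: abs_mult)
  ultimately show ?thesis by metis
qed

theorem lemma2p1:
  fixes m h :: nat and \<eta> :: real
  assumes "\<eta> > 1" and "\<not> algebraic \<eta>"
  shows "\<exists>\<delta>>0. \<exists>\<epsilon>>0. \<forall>(e :: nat \<Rightarrow> nat) (b :: nat \<Rightarrow> int) (y :: nat \<Rightarrow> real).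
      e 1 = 0 \<longrightarrow>
      (\<forall>i j. 1 \<le> i \<longrightarrow> i < j \<longrightarrow> j \<le> h \<longrightarrow> e i < e j) \<longrightarrow>
      (\<forall>i\<in>{1..h}. \<bar>b i\<bar> \<le> int m) \<longrightarrow>
      (\<exists>i\<in>{1..h}. b i \<noteq> 0) \<longrightarrow>
      (\<forall>i j. 1 \<le> i \<longrightarrow> i < j \<longrightarrow> j \<le> h \<longrightarrow>
          y j ^ e j / y i ^ e i \<in> {(\<eta> - \<delta>) ^ (e j - e i) .. (\<eta> + \<delta>) ^ (e j - e i)}) \<longrightarrow>
      \<epsilon> \<le> \<bar>\<Sum>i=1..h. of_int (b i) * y i ^ e i\<bar>"
proof -
  obtain c where "c > 0"
    and bound: "\<forall>\<^sub>F \<delta> in at_right 0. admissible_sums_ge \<eta> \<delta> m (\<lambda>S. card S \<le> h) c"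
    using admissible_sums_ge_card_le[OF assms] by blast
  have "\<forall>\<^sub>F \<delta> in at_right 0. 0 < \<delta> \<and> \<delta> < \<eta> - 1"
    using assms(1) by (auto simp: eventually_at_right_field intro!: exI[of _ "\<eta> - 1"])
  with bound have "\<exists>\<delta>. admissible_sums_ge \<eta> \<delta> m (\<lambda>S. card S \<le> h) c \<and> 0 < \<delta> \<and> \<delta> < \<eta> - 1"
    by (rule eventually_happens'[OF trivial_limit_at_right_real eventually_conj])
  then obtain \<delta> where \<delta>: "admissible_sums_ge \<eta> \<delta> m (\<lambda>S. card S \<le> h) c" and "0 < \<delta>" "\<delta> < \<eta> - 1"
    by (elim exE conjE)
  show ?thesis
  proof (rule exI[of _ \<delta>], intro conjI exI[of _ c] allI impI)
    fix e :: "nat \<Rightarrow> nat" and b :: "nat \<Rightarrow> int" and y :: "nat \<Rightarrow> real"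
    assume "e 1 = 0" "\<forall>i j. 1 \<le> i \<longrightarrow> i < j \<longrightarrow> j \<le> h \<longrightarrow> e i < e j"
      "\<forall>i\<in>{1..h}. \<bar>b i\<bar> \<le> int m" "\<exists>i\<in>{1..h}. b i \<noteq> 0"
      "\<forall>i j. 1 \<le> i \<longrightarrow> i < j \<longrightarrow> j \<le> h \<longrightarrow>
          y j ^ e j / y i ^ e i \<in> {(\<eta> - \<delta>) ^ (e j - e i) .. (\<eta> + \<delta>) ^ (e j - e i)}"
    from normalize_by_last_nonzero_term[OF \<open>0 < \<delta>\<close> \<open>\<delta> < \<eta> - 1\<close> this]
    obtain S a r where "admissible \<eta> \<delta> m S a r" "card S \<le> h"
      and normalized: "\<bar>\<Sum>d\<in>S. of_int (a d) * r d\<bar> \<le> \<bar>\<Sum>i=1..h. of_int (b i) * y i ^ e i\<bar>"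
      by blast
    then have "c \<le> \<bar>\<Sum>d\<in>S. of_int (a d) * r d\<bar>" using \<delta> by (simp add: admissible_sums_ge_def)
    with normalized show "c \<le> \<bar>\<Sum>i=1..h. of_int (b i) * y i ^ e i\<bar>" by linarith
  qed (use \<open>0 < \<delta>\<close> \<open>c > 0\<close> in auto)
qed

end
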